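(* In the standing setting, if the step size satisfies $\eta\le\frac{1}{\kappa^2C_W}$, then for every $t\ge 0$ (with $f_1=0$), $\|f_{t+1}\|_K^2\le M^2C_W\,\eta\, t$ almost surely.
   Context: Standing setting: $\rho$ probability on $\mathcal X\times\mathcal Y$, $\mathcal Y\subseteq\mathbb R$, $|y|\le M$ a.s.; $K$ measurable symmetric positive semi-definite kernel with $\kappa=\sup_x\sqrt{K(x,x)}<\infty$, RKHS $\mathcal H_K$ with norm $\|\cdot\|_K$, $K_x=K(x,\cdot)$. $W:[0,\infty)\to\mathbb R$ with $W'_+(0)>0$, $W'(s)>0$ for $s>0$, $C_W:=\sup_{s>0}|W'(s)|<\infty$. Online algorithm: $z_t=(x_t,y_t)$ i.i.d. from $\rho$, $\sigma>0$, constant step size $\eta>0$, $f_1=0$, $f_{t+1}=f_t-\eta W'(\xi_{t,\sigma})(f_t(x_t)-y_t)K_{x_t}$, $\xi_{t,\sigma}=(y_t-f_t(x_t))^2/\sigma^2$. *)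

theory Defs
  imports "HOL-Probability.Probability"
begin

text \<open>A coefficient list c (of length n) together with the sample path z represents
  the function  sum_{i<n} c!i * K_{x_{i+1}}  in H_K, where x_{i+1} = fst (z (i+1)).\<close>

definition kexp_eval :: "('x \<Rightarrow> 'x \<Rightarrow> real) \<Rightarrow> (nat \<Rightarrow> 'x \<times> real) \<Rightarrow> real list \<Rightarrow> 'x \<Rightarrow> real" where
  "kexp_eval K z c x = (\<Sum>i<length c. c ! i * K (fst (z (Suc i))) x)"

definition kexp_norm2 :: "('x \<Rightarrow> 'x \<Rightarrow> real) \<Rightarrow> (nat \<Rightarrow> 'x \<times> real) \<Rightarrow> real list \<Rightarrow> real" where
  "kexp_norm2 K z c = (\<Sum>i<length c. \<Sum>j<length c. c ! i * c ! j * K (fst (z (Suc i))) (fst (z (Suc j))))"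

text \<open>Coefficients of the online iterate: ol_coef K W' sigma eta z n represents f_{n+1}
  (so n = 0 gives f_1 = 0), with
  f_{t+1} = f_t - eta W'(xi_t) (f_t(x_t) - y_t) K_{x_t}, xi_t = (y_t - f_t(x_t))^2 / sigma^2.\<close>
primrec ol_coef :: "('x \<Rightarrow> 'x \<Rightarrow> real) \<Rightarrow> (real \<Rightarrow> real) \<Rightarrow> real \<Rightarrow> real \<Rightarrow> (nat \<Rightarrow> 'x \<times> real) \<Rightarrow> nat \<Rightarrow> real list" where
  "ol_coef K W' \<sigma> \<eta> z 0 = []"
| "ol_coef K W' \<sigma> \<eta> z (Suc n) =
     (let c = ol_coef K W' \<sigma> \<eta> z n;
          x = fst (z (Suc n)); y = snd (z (Suc n));
          ft = kexp_eval K z c x;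
          \<xi> = (y - ft)\<^sup>2 / \<sigma>\<^sup>2
      in c @ [- \<eta> * W' \<xi> * (ft - y)])"

definition kappa :: "'x measure \<Rightarrow> ('x \<Rightarrow> 'x \<Rightarrow> real) \<Rightarrow> real" where
  "kappa X K = (SUP x\<in>space X. sqrt (K x x))"

definition C_W :: "(real \<Rightarrow> real) \<Rightarrow> real" where
  "C_W W' = (SUP s\<in>{0<..}. \<bar>W' s\<bar>)"

end

theory Submission
  imports Defs
begin

text \<open>Write the online update as \<open>f\<^sub>t\<^sub>+\<^sub>1 = f\<^sub>t + a K\<^sub>x\<close> with \<open>a = -\<eta> w (f\<^sub>t(x) - y)\<close> and
  \<open>w = W'(\<xi>) \<le> C\<^sub>W\<close>. By the reproducing property
  \<open>\<parallel>f\<^sub>t\<^sub>+\<^sub>1\<parallel>\<^sup>2 - \<parallel>f\<^sub>t\<parallel>\<^sup>2 = 2 a f\<^sub>t(x) + a\<^sup>2 K(x,x) = \<eta> w (y\<^sup>2 - f\<^sub>t(x)\<^sup>2) - \<eta> w (f\<^sub>t(x) - y)\<^sup>2 (1 - \<eta> w K(x,x))\<close>,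
  and the step-size condition \<open>\<eta> w K(x,x) \<le> \<eta> C\<^sub>W \<kappa>\<^sup>2 \<le> 1\<close> makes the last term nonpositive,
  so every step adds at most \<open>\<eta> C\<^sub>W M\<^sup>2\<close>. The only probabilistic input is that almost surely
  all samples lie in \<open>space X\<close> and satisfy \<open>\<bar>y\<bar> \<le> M\<close>.\<close>

lemma length_ol_coef [simp]: "length (ol_coef K W' \<sigma> \<eta> z n) = n"
  by (induction n) (simp_all add: Let_def)

lemma kexp_norm2_snoc:
  assumes in_S: "\<And>i. i \<le> length c \<Longrightarrow> fst (z (Suc i)) \<in> S"
    and K_sym: "\<And>x x'. x \<in> S \<Longrightarrow> x' \<in> S \<Longrightarrow> K x x' = K x' x"
  defines "x \<equiv> fst (z (Suc (length c)))"
  shows "kexp_norm2 K z (c @ [a])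
           = kexp_norm2 K z c + 2 * a * kexp_eval K z c x + a\<^sup>2 * K x x"
proof -
  let ?n = "length c" and ?x = "\<lambda>i. fst (z (Suc i))"
  have cross: "(\<Sum>j<?n. a * c ! j * K x (?x j)) = a * kexp_eval K z c x"
    using in_S K_sym by (auto simp: kexp_eval_def x_def sum_distrib_left mult.assoc intro!: sum.cong)
  have "kexp_norm2 K z (c @ [a])
      = (\<Sum>i<?n. (\<Sum>j<?n. c ! i * c ! j * K (?x i) (?x j)) + c ! i * a * K (?x i) x)
        + ((\<Sum>j<?n. a * c ! j * K x (?x j)) + a * a * K x x)"
    by (simp add: kexp_norm2_def nth_append x_def)
  also have "\<dots> = kexp_norm2 K z c + 2 * a * kexp_eval K z c x + a\<^sup>2 * K x x"
    unfolding cross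
    by (simp add: kexp_norm2_def kexp_eval_def sum.distrib sum_distrib_left power2_eq_square
        algebra_simps)
  finally show ?thesis .
qed

lemma online_step_increment_le:
  fixes \<eta> w k a y :: real
  assumes "0 \<le> \<eta> * w" and "\<eta> * w * k \<le> 1"
  shows "2 * (- \<eta> * w * (a - y)) * a + (- \<eta> * w * (a - y))\<^sup>2 * k \<le> \<eta> * w * y\<^sup>2"
proof -
  have "2 * (- \<eta> * w * (a - y)) * a + (- \<eta> * w * (a - y))\<^sup>2 * k
      = \<eta> * w * y\<^sup>2 - \<eta> * w * a\<^sup>2 - \<eta> * w * (a - y)\<^sup>2 * (1 - \<eta> * w * k)"
    by (simp add: power2_eq_square algebra_simps)
  moreover have "0 \<le> \<eta> * w * a\<^sup>2" "0 \<le> \<eta> * w * (a - y)\<^sup>2 * (1 - \<eta> * w * k)"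
    using assms by simp_all
  ultimately show ?thesis by linarith
qed

lemma kexp_norm2_ol_coef_le:
  fixes z :: "nat \<Rightarrow> 'x \<times> real"
  assumes in_S: "\<And>i. i \<ge> 1 \<Longrightarrow> fst (z i) \<in> S"
    and y_bounded: "\<And>i. i \<ge> 1 \<Longrightarrow> \<bar>snd (z i)\<bar> \<le> M"
    and K_sym: "\<And>x x'. x \<in> S \<Longrightarrow> x' \<in> S \<Longrightarrow> K x x' = K x' x"
    and K_diag: "\<And>x. x \<in> S \<Longrightarrow> 0 \<le> K x x \<and> K x x \<le> k"
    and W'_bounds: "\<And>s. s > 0 \<Longrightarrow> 0 \<le> W' s \<and> W' s \<le> C"
    and "\<sigma> > 0" and "\<eta> > 0" and step: "\<eta> * k * C \<le> 1"
  shows "kexp_norm2 K z (ol_coef K W' \<sigma> \<eta> z n) \<le> M\<^sup>2 * C * \<eta> * real n"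
proof (induction n)
  case 0
  then show ?case by (simp add: kexp_norm2_def)
next
  case (Suc n)
  define c where "c = ol_coef K W' \<sigma> \<eta> z n"
  define x where "x = fst (z (Suc n))"
  define y where "y = snd (z (Suc n))"
  define a where "a = kexp_eval K z c x"
  define w where "w = W' ((y - a)\<^sup>2 / \<sigma>\<^sup>2)"
  have "ol_coef K W' \<sigma> \<eta> z (Suc n) = c @ [- \<eta> * w * (a - y)]"
    by (simp add: c_def x_def y_def a_def w_def Let_def)
  then have norm_eq: "kexp_norm2 K z (ol_coef K W' \<sigma> \<eta> z (Suc n))
      = kexp_norm2 K z c + (2 * (- \<eta> * w * (a - y)) * a + (- \<eta> * w * (a - y))\<^sup>2 * K x x)"
    using kexp_norm2_snoc[of c z S K] in_S K_sym by (simp add: c_def a_def x_def)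
  have "0 \<le> C" using W'_bounds[of 1] by simp
  have "2 * (- \<eta> * w * (a - y)) * a + (- \<eta> * w * (a - y))\<^sup>2 * K x x \<le> M\<^sup>2 * C * \<eta>"
  proof (cases "a = y")
    \<comment> \<open>\<open>W' 0\<close> is not bounded by \<open>C\<close>, but it only occurs when the residual vanishes\<close>
    case True
    then show ?thesis using \<open>0 \<le> C\<close> \<open>\<eta> > 0\<close> by simp
  next
    case False
    then have w: "0 \<le> w" "w \<le> C"
      using W'_bounds \<open>\<sigma> > 0\<close> by (auto simp: w_def)
    have Kxx: "0 \<le> K x x" "K x x \<le> k" using K_diag in_S by (auto simp: x_def)
    have "\<eta> * w * K x x \<le> \<eta> * C * k"
      using w Kxx \<open>\<eta> > 0\<close> by (intro mult_mono) auto
    also have "\<dots> \<le> 1" using step by (simp add: mult_ac)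
    finally have "2 * (- \<eta> * w * (a - y)) * a + (- \<eta> * w * (a - y))\<^sup>2 * K x x \<le> \<eta> * w * y\<^sup>2"
      using w \<open>\<eta> > 0\<close> by (intro online_step_increment_le) simp_all
    also have "\<dots> \<le> \<eta> * C * M\<^sup>2"
      using w \<open>\<eta> > 0\<close> y_bounded[of "Suc n"] abs_le_square_iff[of y M]
      by (intro mult_mono) (auto simp: y_def)
    finally show ?thesis by (simp add: algebra_simps)
  qed
  moreover have "kexp_norm2 K z c \<le> M\<^sup>2 * C * \<eta> * real n" using Suc.IH by (simp add: c_def)
  ultimately show ?case unfolding norm_eq by (simp add: algebra_simps)
qed

lemma AE_all_identically_distributed:
  assumes "countable I"
    and measurable: "\<And>i. i \<in> I \<Longrightarrow> Z i \<in> measurable P \<rho>"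
    and distributed: "\<And>i. i \<in> I \<Longrightarrow> distr P \<rho> (Z i) = \<rho>"
    and "AE z in \<rho>. Q z"
  shows "AE \<omega> in P. \<forall>i\<in>I. Q (Z i \<omega>)"
proof (rule AE_ball_countable')
  fix i assume "i \<in> I"
  then show "AE \<omega> in P. Q (Z i \<omega>)"
    using AE_distrD[OF measurable] distributed \<open>AE z in \<rho>. Q z\<close> by metis
qed fact

lemma diag_le_kappa_squared:
  assumes "bdd_above ((\<lambda>x. sqrt (K x x)) ` space X)" and "x \<in> space X" and "0 \<le> K x x"
  shows "K x x \<le> (kappa X K)\<^sup>2"
proof -
  have "sqrt (K x x) \<le> kappa X K"
    unfolding kappa_def using assms by (intro cSUP_upper) auto
  then show ?thesis using \<open>0 \<le> K x x\<close> by (metis real_sqrt_le_iff real_sqrt_unique sqrt_le_D)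
qed

lemma le_C_W:
  assumes "bdd_above ((\<lambda>s. \<bar>W' s\<bar>) ` {0<..})" and "s > 0"
  shows "W' s \<le> C_W W'"
proof -
  have "\<bar>W' s\<bar> \<le> C_W W'" unfolding C_W_def using assms by (intro cSUP_upper) auto
  then show ?thesis by simp
qed

theorem proposition2:
  fixes X :: "'x measure" and \<rho> :: "('x \<times> real) measure"
    and P :: "'w measure" and Z :: "nat \<Rightarrow> 'w \<Rightarrow> 'x \<times> real"
    and K :: "'x \<Rightarrow> 'x \<Rightarrow> real"
    and W W' :: "real \<Rightarrow> real"
    and M \<sigma> \<eta> :: real and t :: nat
  assumes rho: "prob_space \<rho>" "sets \<rho> = sets (X \<Otimes>\<^sub>M borel)"
    and bounded_y: "AE z in \<rho>. \<bar>snd z\<bar> \<le> M"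
    and K_meas: "case_prod K \<in> borel_measurable (X \<Otimes>\<^sub>M X)"
    and K_sym: "\<And>x x'. x \<in> space X \<Longrightarrow> x' \<in> space X \<Longrightarrow> K x x' = K x' x"
    and K_psd: "\<And>xs cs. set xs \<subseteq> space X \<Longrightarrow> length cs = length xs \<Longrightarrow>
                  0 \<le> (\<Sum>i<length xs. \<Sum>j<length xs. cs ! i * cs ! j * K (xs ! i) (xs ! j))"
    and kappa_fin: "bdd_above ((\<lambda>x. sqrt (K x x)) ` space X)"
    and W_deriv0: "(W has_real_derivative W' 0) (at_right 0)" and W'0: "W' 0 > 0"
    and W_deriv: "\<And>s. s > 0 \<Longrightarrow> (W has_real_derivative W' s) (at s)"
    and W'_pos: "\<And>s. s > 0 \<Longrightarrow> W' s > 0"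
    and CW_fin: "bdd_above ((\<lambda>s. \<bar>W' s\<bar>) ` {0<..})"
    and P: "prob_space P"
    and iid: "prob_space.indep_vars P (\<lambda>_. \<rho>) Z {1..}" "\<And>i. i \<ge> 1 \<Longrightarrow> distr P \<rho> (Z i) = \<rho>"
    and sigma: "\<sigma> > 0" and eta: "\<eta> > 0"
    and step: "\<eta> * (kappa X K)\<^sup>2 * C_W W' \<le> 1"
  shows "AE \<omega> in P. kexp_norm2 K (\<lambda>i. Z i \<omega>) (ol_coef K W' \<sigma> \<eta> (\<lambda>i. Z i \<omega>) t)
                      \<le> M\<^sup>2 * C_W W' * \<eta> * real t"
proof -
  have "\<And>i. i \<in> {1..} \<Longrightarrow> Z i \<in> measurable P \<rho>"
    using iid(1) unfolding prob_space.indep_vars_def2[OF P] by auto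
  moreover have "AE z in \<rho>. z \<in> space \<rho> \<and> \<bar>snd z\<bar> \<le> M"
    using bounded_y by (simp add: AE_space)
  ultimately have "AE \<omega> in P. \<forall>i\<in>{1..}. Z i \<omega> \<in> space \<rho> \<and> \<bar>snd (Z i \<omega>)\<bar> \<le> M"
    using iid(2) by (intro AE_all_identically_distributed) auto
  moreover have "space \<rho> = space X \<times> UNIV"
    using sets_eq_imp_space_eq[OF rho(2)] by (simp add: space_pair_measure)
  moreover have "0 \<le> K x x" if "x \<in> space X" for x
    using K_psd[of "[x]" "[1]"] that by simp
  ultimately show ?thesis
  proof (elim AE_mp, intro AE_I2 impI)
    fix \<omega> assume "\<forall>i\<in>{1..}. Z i \<omega> \<in> space \<rho> \<and> \<bar>snd (Z i \<omega>)\<bar> \<le> M"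
    then show "kexp_norm2 K (\<lambda>i. Z i \<omega>) (ol_coef K W' \<sigma> \<eta> (\<lambda>i. Z i \<omega>) t)
                 \<le> M\<^sup>2 * C_W W' * \<eta> * real t"
      using \<open>space \<rho> = space X \<times> UNIV\<close> \<open>\<And>x. x \<in> space X \<Longrightarrow> 0 \<le> K x x\<close>
        diag_le_kappa_squared[where K = K, OF kappa_fin] le_C_W[OF CW_fin] W'_pos K_sym sigma eta step
      by (intro kexp_norm2_ol_coef_le[where S = "space X"]) (auto simp: less_imp_le mem_Times_iff)
  qed
qed

end
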